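(* Let $\alpha\in(0,1)$, $\tau>0$, $t_m=m\tau$, and let $v=(v^0,v^1,v^2,\dots)$ be any sequence of real numbers. Define $$a_0^{(\alpha)}=\frac{1}{\Gamma(2-\alpha)},\qquad a_k^{(\alpha)}=\frac{1}{\Gamma(2-\alpha)}\big[(k+1)^{1-\alpha}-k^{1-\alpha}\big],\ k\ge1,$$ and, for $n\ge1$, $$\delta_t^{\alpha}v^n=\frac{1}{\tau^{\alpha}}\Big[a_0^{(\alpha)}v^n-\sum_{k=1}^{n-1}\big(a_{n-k-1}^{(\alpha)}-a_{n-k}^{(\alpha)}\big)v^k-a_{n-1}^{(\alpha)}v^0\Big].$$ Then for every integer $m\ge1$, $$\tau\sum_{n=1}^{m}v^n\,\delta_t^{\alpha}v^n\ \ge\ \frac12\,\tau^{1-\alpha}\sum_{n=1}^{m}a_{m-n}^{(\alpha)}(v^n)^2-\frac{t_m^{1-\alpha}}{2\Gamma(2-\alpha)}(v^0)^2 .$$ *)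

theory Defs
  imports "HOL-Analysis.Analysis"
begin

definition L1_coef :: "real \<Rightarrow> nat \<Rightarrow> real" where
  "L1_coef \<alpha> k = (if k = 0 then 1 / Gamma (2 - \<alpha>)
     else (1 / Gamma (2 - \<alpha>)) * ((real k + 1) powr (1 - \<alpha>) - (real k) powr (1 - \<alpha>)))"

definition L1_caputo :: "real \<Rightarrow> real \<Rightarrow> (nat \<Rightarrow> real) \<Rightarrow> nat \<Rightarrow> real" where
  "L1_caputo \<alpha> \<tau> v n = (1 / \<tau> powr \<alpha>) *
     (L1_coef \<alpha> 0 * v n
      - (\<Sum>k = 1..n - 1. (L1_coef \<alpha> (n - k - 1) - L1_coef \<alpha> (n - k)) * v k)
      - L1_coef \<alpha> (n - 1) * v 0)"

end

theory Submission
  imports Defs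
begin

text \<open>
  At step j + 1 the bracket of the L1 scheme reads a(0) x - (\<Sum>k=1..j. c(k) v(k)) - a(j) v(0)
  with x = v(j+1) and c(k) = a(j-k) - a(j+1-k). The coefficients a(k) are nonnegative and
  nonincreasing (concavity of t \<mapsto> t powr (1 - \<alpha>)), so every c(k) is nonnegative, and the
  c(k) telescope to a(0) - a(j). Bounding each product 2 v(k) x by v(k)^2 + x^2 shows that
  2 x times the bracket dominates E(j+1) - E(j) - a(j) v(0)^2, where
  E(n) = \<Sum>k=1..n. a(n-k) v(k)^2. Summing over the steps, the initial terms add up to
  (\<Sum>n<m. a(n)) v(0)^2 = m powr (1 - \<alpha>) / \<Gamma>(2 - \<alpha>) v(0)^2, and scaling by \<tau> powr (1 - \<alpha>)
  gives the claim.
\<close>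

definition L1_stencil :: "(nat \<Rightarrow> real) \<Rightarrow> (nat \<Rightarrow> real) \<Rightarrow> nat \<Rightarrow> real" where
  "L1_stencil a v n = a 0 * v n - (\<Sum>k = 1..n - 1. (a (n - k - 1) - a (n - k)) * v k) - a (n - 1) * v 0"

definition L1_energy :: "(nat \<Rightarrow> real) \<Rightarrow> (nat \<Rightarrow> real) \<Rightarrow> nat \<Rightarrow> real" where
  "L1_energy a v n = (\<Sum>k = 1..n. a (n - k) * (v k)\<^sup>2)"

lemma L1_caputo_eq_stencil: "L1_caputo \<alpha> \<tau> v n = L1_stencil (L1_coef \<alpha>) v n / \<tau> powr \<alpha>"
  by (simp add: L1_caputo_def L1_stencil_def)

lemma sum_reversed_telescope:
  fixes a :: "nat \<Rightarrow> 'a::ab_group_add"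
  shows "(\<Sum>k = 1..j. a (j - k) - a (Suc j - k)) = a 0 - a j"
proof -
  have "(\<Sum>k = 1..j. a (j - k) - a (Suc j - k)) = (\<Sum>i<j. a i - a (Suc i))"
    by (rule sum.reindex_bij_witness[of _ "\<lambda>i. j - i" "\<lambda>k. j - k"]) (auto simp: Suc_diff_le)
  also have "\<dots> = a 0 - a j"
    by (rule sum_lessThan_telescope')
  finally show ?thesis .
qed

lemma L1_stencil_Suc:
  "L1_stencil a v (Suc j) = a 0 * v (Suc j) - (\<Sum>k = 1..j. (a (j - k) - a (Suc j - k)) * v k) - a j * v 0"
  by (simp add: L1_stencil_def)

lemma L1_energy_Suc:
  "L1_energy a v (Suc j) = a 0 * (v (Suc j))\<^sup>2 + L1_energy a v j - (\<Sum>k = 1..j. (a (j - k) - a (Suc j - k)) * (v k)\<^sup>2)"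
  by (simp add: L1_energy_def sum_subtractf left_diff_distrib)

lemma weighted_product_le_squares:
  fixes c x y :: real
  assumes "0 \<le> c"
  shows "2 * (c * x * y) \<le> c * x\<^sup>2 + c * y\<^sup>2"
  using mult_left_mono[OF sum_squares_bound[of x y] assms] by (simp add: algebra_simps)

lemma L1_stencil_step_ge:
  fixes a v :: "nat \<Rightarrow> real"
  assumes antimono: "\<And>k. a (Suc k) \<le> a k" and nonneg: "\<And>k. 0 \<le> a k"
  shows "2 * (v (Suc j) * L1_stencil a v (Suc j))
           \<ge> L1_energy a v (Suc j) - L1_energy a v j - a j * (v 0)\<^sup>2"
proof -
  define x where "x = v (Suc j)"
  define c where "c k = a (j - k) - a (Suc j - k)" for k
  have c_nonneg: "0 \<le> c k" if "k \<le> j" for k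
    using antimono[of "j - k"] that by (simp add: c_def Suc_diff_le)
  have history: "2 * (\<Sum>k = 1..j. c k * v k * x) \<le> (\<Sum>k = 1..j. c k * (v k)\<^sup>2) + a 0 * x\<^sup>2 - a j * x\<^sup>2"
  proof -
    have "2 * (\<Sum>k = 1..j. c k * v k * x) \<le> (\<Sum>k = 1..j. c k * (v k)\<^sup>2 + c k * x\<^sup>2)"
      unfolding sum_distrib_left by (intro sum_mono weighted_product_le_squares c_nonneg) simp
    also have "\<dots> = (\<Sum>k = 1..j. c k * (v k)\<^sup>2) + (\<Sum>k = 1..j. c k) * x\<^sup>2"
      by (simp add: sum.distrib sum_distrib_right)
    also have "(\<Sum>k = 1..j. c k) = a 0 - a j"
      unfolding c_def by (rule sum_reversed_telescope)
    finally show ?thesis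
      by (simp add: algebra_simps)
  qed
  have initial: "2 * (a j * v 0 * x) \<le> a j * (v 0)\<^sup>2 + a j * x\<^sup>2"
    using weighted_product_le_squares nonneg by blast
  have "2 * (v (Suc j) * L1_stencil a v (Suc j))
          = 2 * (a 0 * x\<^sup>2) - 2 * (\<Sum>k = 1..j. c k * v k * x) - 2 * (a j * v 0 * x)"
    by (simp add: L1_stencil_Suc x_def c_def sum_distrib_left sum_distrib_right power2_eq_square algebra_simps)
  moreover have "L1_energy a v (Suc j) - L1_energy a v j = a 0 * x\<^sup>2 - (\<Sum>k = 1..j. c k * (v k)\<^sup>2)"
    by (simp add: L1_energy_Suc x_def c_def)
  ultimately show ?thesis
    using history initial by linarith
qed

lemma L1_stencil_sum_ge:
  fixes a v :: "nat \<Rightarrow> real"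
  assumes "\<And>k. a (Suc k) \<le> a k" and "\<And>k. 0 \<le> a k"
  shows "2 * (\<Sum>n = 1..m. v n * L1_stencil a v n) \<ge> L1_energy a v m - (\<Sum>n<m. a n) * (v 0)\<^sup>2"
proof (induction m)
  case 0
  show ?case by (simp add: L1_energy_def)
next
  case (Suc m)
  then show ?case
    using L1_stencil_step_ge[of a, OF assms, of v m] by (simp add: algebra_simps)
qed

lemma powr_increment_antimono:
  fixes b x y :: real
  assumes "0 < b" "b \<le> 1" "0 \<le> x" "x \<le> y"
  shows "(y + 1) powr b - y powr b \<le> (x + 1) powr b - x powr b"
proof (rule DERIV_nonpos_imp_decreasing_open[OF \<open>x \<le> y\<close>])
  fix t assume t: "x < t" "t < y"
  then have "0 < t" using assms by linarith
  have "DERIV (\<lambda>t. (t + 1) powr b - t powr b) t :> b * (t + 1) powr (b - 1) - b * t powr (b - 1)"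
    using \<open>0 < t\<close> by (auto intro!: derivative_eq_intros)
  moreover have "(t + 1) powr (b - 1) \<le> t powr (b - 1)"
    using \<open>0 < t\<close> assms by (intro powr_mono2') auto
  ultimately show "\<exists>d. DERIV (\<lambda>t. (t + 1) powr b - t powr b) t :> d \<and> d \<le> 0"
    using assms by (auto intro!: mult_left_mono)
next
  show "continuous_on {x..y} (\<lambda>t. (t + 1) powr b - t powr b)"
    using assms by (auto intro!: continuous_intros continuous_on_powr')
qed

text \<open>The case \<open>k = 0\<close> fits this formula because \<open>0 powr _ = 0\<close>.\<close>

lemma L1_coef_eq: "L1_coef \<alpha> k = ((real k + 1) powr (1 - \<alpha>) - real k powr (1 - \<alpha>)) / Gamma (2 - \<alpha>)"
  by (simp add: L1_coef_def)

lemma L1_coef_nonneg: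
  assumes "\<alpha> \<le> 1"
  shows "0 \<le> L1_coef \<alpha> k"
  using assms Gamma_real_pos[of "2 - \<alpha>"] by (simp add: L1_coef_eq powr_mono2)

lemma L1_coef_antimono:
  assumes "0 \<le> \<alpha>" "\<alpha> < 1"
  shows "L1_coef \<alpha> (Suc k) \<le> L1_coef \<alpha> k"
proof -
  have "(real (Suc k) + 1) powr (1 - \<alpha>) - real (Suc k) powr (1 - \<alpha>)
          \<le> (real k + 1) powr (1 - \<alpha>) - real k powr (1 - \<alpha>)"
    using assms by (intro powr_increment_antimono) auto
  then show ?thesis
    unfolding L1_coef_eq using assms Gamma_real_pos[of "2 - \<alpha>"] by (simp add: divide_right_mono)
qed

lemma L1_coef_sum: "(\<Sum>n<m. L1_coef \<alpha> n) = real m powr (1 - \<alpha>) / Gamma (2 - \<alpha>)"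
proof -
  have "(\<Sum>n<m. L1_coef \<alpha> n) = (\<Sum>n<m. real (Suc n) powr (1 - \<alpha>) - real n powr (1 - \<alpha>)) / Gamma (2 - \<alpha>)"
    by (simp add: L1_coef_eq sum_divide_distrib add.commute)
  also have "\<dots> = real m powr (1 - \<alpha>) / Gamma (2 - \<alpha>)"
    by (subst sum_lessThan_telescope) simp
  finally show ?thesis .
qed

theorem lemma7:
  fixes \<alpha> \<tau> :: real and v :: "nat \<Rightarrow> real" and m :: nat
  assumes "0 < \<alpha>" "\<alpha> < 1" "0 < \<tau>" "1 \<le> m"
  shows "\<tau> * (\<Sum>n = 1..m. v n * L1_caputo \<alpha> \<tau> v n)
     \<ge> (1/2) * \<tau> powr (1 - \<alpha>) * (\<Sum>n = 1..m. L1_coef \<alpha> (m - n) * (v n)^2)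
       - (real m * \<tau>) powr (1 - \<alpha>) / (2 * Gamma (2 - \<alpha>)) * (v 0)^2"
proof -
  let ?S = "\<Sum>n = 1..m. v n * L1_stencil (L1_coef \<alpha>) v n"
  have rescale: "\<tau> * (\<Sum>n = 1..m. v n * L1_caputo \<alpha> \<tau> v n) = \<tau> powr (1 - \<alpha>) * ?S"
    using \<open>0 < \<tau>\<close> by (simp add: L1_caputo_eq_stencil powr_diff sum_distrib_left sum_divide_distrib)
  have "2 * ?S \<ge> L1_energy (L1_coef \<alpha>) v m - real m powr (1 - \<alpha>) / Gamma (2 - \<alpha>) * (v 0)\<^sup>2"
    using L1_stencil_sum_ge[of "L1_coef \<alpha>", OF L1_coef_antimono L1_coef_nonneg] assms
    by (simp add: L1_coef_sum)
  then have "\<tau> powr (1 - \<alpha>) * (2 * ?S) \<ge> \<tau> powr (1 - \<alpha>) *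
      (L1_energy (L1_coef \<alpha>) v m - real m powr (1 - \<alpha>) / Gamma (2 - \<alpha>) * (v 0)\<^sup>2)"
    by (intro mult_left_mono) auto
  moreover have "(real m * \<tau>) powr (1 - \<alpha>) = real m powr (1 - \<alpha>) * \<tau> powr (1 - \<alpha>)"
    using \<open>0 < \<tau>\<close> by (simp add: powr_mult)
  ultimately show ?thesis
    unfolding rescale by (simp add: L1_energy_def algebra_simps)
qed

end
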